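(* Let $G$ be a directed acyclic graph with $n$ vertices, let $s,t\in V(G)$, and let $k=\operatorname{fvs}(G)$. Then the number of distinct directed $s$-$t$ paths in $G$ is at most $k^k n^{\mathcal{O}(k)}$.
   Context: $\operatorname{fvs}(G)$ denotes the minimum size of a feedback vertex set of the underlying undirected graph of $G$, i.e., the minimum number of vertices whose removal makes the underlying undirected graph a forest. *)

theory Defs
  imports Main
begin

definition dpaths :: "'a set \<Rightarrow> ('a \<times> 'a) set \<Rightarrow> 'a \<Rightarrow> 'a \<Rightarrow> 'a list set" where
  "dpaths V E s t = {p. p \<noteq> [] \<and> hd p = s \<and> last p = t \<and> distinct p \<and> set p \<subseteq> V \<and>
      (\<forall>i < length p - 1. (p ! i, p ! (i + 1)) \<in> E)}"

definition uadj :: "('a \<times> 'a) set \<Rightarrow> 'a \<Rightarrow> 'a \<Rightarrow> bool" where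
  "uadj E u v \<longleftrightarrow> (u, v) \<in> E \<or> (v, u) \<in> E"

definition ucycle :: "'a set \<Rightarrow> ('a \<times> 'a) set \<Rightarrow> 'a list \<Rightarrow> bool" where
  "ucycle V E c \<longleftrightarrow> length c \<ge> 3 \<and> distinct c \<and> set c \<subseteq> V \<and>
      (\<forall>i < length c. uadj E (c ! i) (c ! ((i + 1) mod length c)))"

definition is_uforest :: "'a set \<Rightarrow> ('a \<times> 'a) set \<Rightarrow> bool" where
  "is_uforest V E \<longleftrightarrow> \<not> (\<exists>c. ucycle V E c)"

definition fvs :: "'a set \<Rightarrow> ('a \<times> 'a) set \<Rightarrow> nat" where
  "fvs V E = Min {card X | X. X \<subseteq> V \<and> is_uforest (V - X) E}"

end

theory Submission
  imports Defs
begin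

(* Let X be a minimum feedback vertex set, |X| = k. Since V - X induces a forest of the
   underlying undirected graph, two vertices of V - X are joined by at most one simple walk
   inside V - X. A simple path is therefore determined by its skeleton: the X-vertices it visits
   (at most k of them), interleaved with the endpoints of the maximal subpaths avoiding X.
   Skeletons are lists of length at most 2k + 1 over an alphabet of n + n^2 + 1 letters, so for
   k > 0 (hence n >= 3) there are at most (2k + 2) (n^3)^(2k + 1) <= n^(12k) of them; for k = 0
   the graph is a forest and there is at most one path. *)

lemma uadj_commute: "uadj E u v \<longleftrightarrow> uadj E v u"
  unfolding uadj_def by auto

lemma successively_uadj_rev [simp]:
  "successively (uadj E) (rev p) \<longleftrightarrow> successively (uadj E) p"
  unfolding successively_rev uadj_def by (simp add: disj_commute)

lemma ucycleI:
  assumes "3 \<le> length c" "distinct c" "set c \<subseteq> V" "successively (uadj E) (c @ [hd c])"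
  shows "ucycle V E c"
  unfolding ucycle_def
proof (intro conjI allI impI assms(1-3))
  fix i assume i: "i < length c"
  then have "c \<noteq> []" by auto
  have "uadj E ((c @ [hd c]) ! i) ((c @ [hd c]) ! Suc i)"
    using assms(4) i by (simp add: successively_conv_nth)
  moreover have "(c @ [hd c]) ! Suc i = c ! ((i + 1) mod length c)"
  proof (cases "Suc i = length c")
    case True
    then show ?thesis using \<open>c \<noteq> []\<close> by (simp add: hd_conv_nth)
  qed (use i in \<open>simp add: nth_append\<close>)
  ultimately show "uadj E (c ! i) (c ! ((i + 1) mod length c))"
    using i by (simp add: nth_append)
qed

lemma ucycle_of_two_walks:
  assumes "successively (uadj E) (a # P @ [w])" "successively (uadj E) (a # Q @ [w])"
    and "distinct (a # P @ [w])" "distinct (a # Q @ [w])"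
    and "set P \<inter> set Q = {}" "P \<noteq> [] \<or> Q \<noteq> []"
    and "set (a # P @ [w]) \<subseteq> V" "set Q \<subseteq> V"
  shows "ucycle V E (a # P @ w # rev Q)"
proof (rule ucycleI)
  have "successively (uadj E) (a # Q)" and "uadj E (last (a # Q)) w"
    using assms(2) by (simp_all add: successively_append_iff flip: append_Cons)
  then have "successively (uadj E) (rev (a # Q))" and "uadj E w (hd (rev (a # Q)))"
    by (simp_all only: successively_uadj_rev hd_rev uadj_commute)
  moreover have "(a # P @ w # rev Q) @ [hd (a # P @ w # rev Q)] = (a # P @ [w]) @ rev (a # Q)"
    by simp
  ultimately show "successively (uadj E) ((a # P @ w # rev Q) @ [hd (a # P @ w # rev Q)])"
    using assms(1) by (simp only: successively_append_iff) simp
  show "3 \<le> length (a # P @ w # rev Q)" using assms(6) by (cases P; cases Q) auto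
qed (use assms in auto)

lemma uforest_walk_unique:
  assumes "is_uforest V E"
    and "successively (uadj E) p" "distinct p" "set p \<subseteq> V" "p \<noteq> []"
    and "successively (uadj E) q" "distinct q" "set q \<subseteq> V" "q \<noteq> []"
    and "hd p = hd q" "last p = last q"
  shows "p = q"
  using assms(2-)
proof (induction p arbitrary: q)
  case Nil
  then show ?case by simp
next
  case (Cons a p')
  then obtain q' where q: "q = a # q'" by (cases q) auto
  consider "p' = [] \<or> q' = []" | "p' \<noteq> []" "q' \<noteq> []" "hd p' = hd q'"
    | "p' \<noteq> []" "q' \<noteq> []" "hd p' \<noteq> hd q'"
    by blast
  then show ?case
  proof cases
    case 1
    have "p' = [] \<longleftrightarrow> q' = []"
      using Cons.prems(2,6,10) q by (metis distinct.simps(2) last_ConsL last_ConsR last_in_set)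
    then show ?thesis using 1 q by simp
  next
    case 2
    then have "p' = q'" using Cons.prems q by (intro Cons.IH) (auto simp: successively_Cons)
    then show ?thesis using q by simp
  next
    case 3
    have "last p' \<in> set q'" using Cons.prems(10) q 3 by simp
    then have "\<exists>x \<in> set p'. x \<in> set q'" using 3 by auto
    from split_list_first_prop[OF this] obtain P w P'
      where p': "p' = P @ w # P'" "w \<in> set q'" "\<forall>x \<in> set P. x \<notin> set q'"
      by blast
    then obtain Q Q' where q': "q' = Q @ w # Q'" by (meson split_list)
    have split: "a # p' = (a # P @ [w]) @ P'" "q = (a # Q @ [w]) @ Q'"
      using p' q' q by simp_all
    have "successively (uadj E) (a # P @ [w])" "successively (uadj E) (a # Q @ [w])"
      using Cons.prems(1,5) unfolding split successively_append_iff by simp_all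
    moreover have "distinct (a # P @ [w])" "distinct (a # Q @ [w])"
      using Cons.prems(2,6) unfolding split distinct_append by simp_all
    moreover have "set (a # P @ [w]) \<subseteq> V" "set Q \<subseteq> V"
      using Cons.prems(3,7) unfolding split by auto
    moreover have "P \<noteq> [] \<or> Q \<noteq> []" using 3 p' q' by auto
    ultimately have "ucycle V E (a # P @ w # rev Q)"
      using p'(3) q' by (intro ucycle_of_two_walks) auto
    then show ?thesis using assms(1) unfolding is_uforest_def by blast
  qed
qed

definition ends :: "'a list \<Rightarrow> ('a \<times> 'a) option" where
  "ends p = (if p = [] then None else Some (hd p, last p))"

lemma uforest_walk_eq_if_ends_eq:
  assumes "is_uforest V E"
    and "successively (uadj E) p" "distinct p" "set p \<subseteq> V"
    and "successively (uadj E) q" "distinct q" "set q \<subseteq> V"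
    and "ends p = ends q"
  shows "p = q"
  using assms(8) uforest_walk_unique[OF assms(1-4) _ assms(5-7)]
  by (cases "p = []"; cases "q = []") (auto simp: ends_def split: if_splits)

function skeleton :: "'a set \<Rightarrow> 'a list \<Rightarrow> ('a + ('a \<times> 'a) option) list" where
  "skeleton X p = Inr (ends (takeWhile (\<lambda>v. v \<notin> X) p)) #
     (case dropWhile (\<lambda>v. v \<notin> X) p of [] \<Rightarrow> [] | x # r \<Rightarrow> Inl x # skeleton X r)"
  by auto
termination
proof (relation "measure (\<lambda>(X, p). length p)")
  fix X :: "'a set" and p x r
  assume "dropWhile (\<lambda>v. v \<notin> X) p = x # r"
  then have "length (x # r) \<le> length p" by (metis length_dropWhile_le)
  then show "((X, r), X, p) \<in> measure (\<lambda>(X, p). length p)" by simp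
qed simp

declare skeleton.simps [simp del]

lemma skeleton_dropWhile_Nil:
  "dropWhile (\<lambda>v. v \<notin> X) p = [] \<Longrightarrow> skeleton X p = [Inr (ends p)]"
  by (subst skeleton.simps) (metis append_Nil2 list.simps(4) takeWhile_dropWhile_id)

lemma skeleton_dropWhile_Cons:
  "dropWhile (\<lambda>v. v \<notin> X) p = x # r \<Longrightarrow>
    skeleton X p = Inr (ends (takeWhile (\<lambda>v. v \<notin> X) p)) # Inl x # skeleton X r"
  by (subst skeleton.simps) simp

lemma length_skeleton: "length (skeleton X p) = 2 * length (filter (\<lambda>v. v \<in> X) p) + 1"
proof (induction X p rule: skeleton.induct)
  case (1 X p)
  have "filter (\<lambda>v. v \<in> X) p = filter (\<lambda>v. v \<in> X) (dropWhile (\<lambda>v. v \<notin> X) p)"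
    by (induction p) auto
  then show ?case using 1
    by (cases "dropWhile (\<lambda>v. v \<notin> X) p")
      (auto simp: skeleton_dropWhile_Nil skeleton_dropWhile_Cons dropWhile_eq_Cons_conv)
qed

lemma ends_in_pairs: "set p \<subseteq> V \<Longrightarrow> ends p \<in> insert None (Some ` (V \<times> V))"
  by (force simp: ends_def)

lemma set_skeleton:
  "set p \<subseteq> V \<Longrightarrow> set (skeleton X p) \<subseteq> V <+> insert None (Some ` (V \<times> V))"
proof (induction X p rule: skeleton.induct)
  case (1 X p)
  have "set (takeWhile (\<lambda>v. v \<notin> X) p) \<subseteq> V" "set (dropWhile (\<lambda>v. v \<notin> X) p) \<subseteq> V"
    using 1(2) by (auto dest: set_takeWhileD set_dropWhileD)
  then show ?case using 1 ends_in_pairs[of p V]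
      ends_in_pairs[of "takeWhile (\<lambda>v. v \<notin> X) p" V]
    by (cases "dropWhile (\<lambda>v. v \<notin> X) p")
      (auto simp: skeleton_dropWhile_Nil skeleton_dropWhile_Cons)
qed

lemma skeleton_inj:
  assumes "is_uforest (V - X) E" "skeleton X p = skeleton X q"
    and "successively (uadj E) p" "distinct p" "set p \<subseteq> V"
    and "successively (uadj E) q" "distinct q" "set q \<subseteq> V"
  shows "p = q"
  using assms
proof (induction X p arbitrary: q rule: skeleton.induct)
  case (1 X p)
  define A R B S where "A = takeWhile (\<lambda>v. v \<notin> X) p" and "R = dropWhile (\<lambda>v. v \<notin> X) p"
    and "B = takeWhile (\<lambda>v. v \<notin> X) q" and "S = dropWhile (\<lambda>v. v \<notin> X) q"
  have p: "p = A @ R" and q: "q = B @ S" by (simp_all add: A_def R_def B_def S_def)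
  have walks: "successively (uadj E) A" "successively (uadj E) R"
    "successively (uadj E) B" "successively (uadj E) S"
    using "1.prems"(3,6) unfolding p q successively_append_iff by simp_all
  have dist: "distinct A" "distinct R" "distinct B" "distinct S"
    using "1.prems"(4,7) unfolding p q by simp_all
  have sets: "set A \<subseteq> V - X" "set B \<subseteq> V - X" "set R \<subseteq> V" "set S \<subseteq> V"
    using "1.prems"(5,8) unfolding A_def B_def R_def S_def by (auto dest: set_takeWhileD set_dropWhileD)
  have "Inr (ends A) # (case R of [] \<Rightarrow> [] | x # r \<Rightarrow> Inl x # skeleton X r) =
      Inr (ends B) # (case S of [] \<Rightarrow> [] | x # r \<Rightarrow> Inl x # skeleton X r)"
    using "1.prems"(2) unfolding A_def B_def R_def S_def by (metis skeleton.simps)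
  then have ends: "ends A = ends B"
    and tails: "(case R of [] \<Rightarrow> [] | x # r \<Rightarrow> Inl x # skeleton X r) =
      (case S of [] \<Rightarrow> [] | x # r \<Rightarrow> Inl x # skeleton X r)"
    by simp_all
  have "A = B" using uforest_walk_eq_if_ends_eq[OF "1.prems"(1)] walks dist sets ends by blast
  moreover have "R = S"
  proof (cases R)
    case Nil
    then show ?thesis using tails by (cases S) auto
  next
    case (Cons x r)
    then obtain r' where S: "S = x # r'" and "skeleton X r = skeleton X r'"
      using tails by (cases S) auto
    then have "r = r'" using Cons walks dist sets "1.prems"(1)
      by (intro "1.IH"[OF Cons[unfolded R_def]]) (auto simp: successively_Cons)
    then show ?thesis using Cons S by simp
  qed
  ultimately show ?case using p q by simp
qed

lemma dpathsD:
  assumes "p \<in> dpaths V E s t"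
  shows "successively (uadj E) p" "distinct p" "set p \<subseteq> V" "p \<noteq> []" "hd p = s" "last p = t"
  using assms unfolding dpaths_def uadj_def successively_conv_nth by auto

lemma card_dpaths_le_1_if_uforest:
  assumes "is_uforest V E"
  shows "card (dpaths V E s t) \<le> 1"
proof -
  have "p = q" if "p \<in> dpaths V E s t" "q \<in> dpaths V E s t" for p q
    using uforest_walk_unique[OF assms dpathsD(1-4)[OF that(1)] dpathsD(1-4)[OF that(2)]]
      dpathsD(5,6)[OF that(1)] dpathsD(5,6)[OF that(2)] by simp
  then show ?thesis by (cases "finite (dpaths V E s t)") (simp_all add: card_le_Suc0_iff_eq)
qed

lemma card_dpaths_le_skeletons:
  assumes "finite V" "X \<subseteq> V" "is_uforest (V - X) E"
  shows "card (dpaths V E s t) \<le> (\<Sum>i\<le>2 * card X + 1. (card V + (card V * card V + 1)) ^ i)"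
proof -
  let ?\<Sigma> = "V <+> insert None (Some ` (V \<times> V))"
  let ?L = "{xs. set xs \<subseteq> ?\<Sigma> \<and> length xs \<le> 2 * card X + 1}"
  have "inj_on (skeleton X) (dpaths V E s t)"
    by (intro inj_onI skeleton_inj[OF assms(3)]) (auto dest: dpathsD)
  moreover have "skeleton X ` dpaths V E s t \<subseteq> ?L"
  proof (intro image_subsetI CollectI conjI)
    fix p assume p: "p \<in> dpaths V E s t"
    then show "set (skeleton X p) \<subseteq> ?\<Sigma>" by (intro set_skeleton) (rule dpathsD(3))
    have "length (filter (\<lambda>v. v \<in> X) p) \<le> card X"
      using dpathsD(2)[OF p] assms(1,2) by (simp add: distinct_length_filter card_mono finite_subset)
    then show "length (skeleton X p) \<le> 2 * card X + 1" by (simp add: length_skeleton)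
  qed
  moreover have "finite ?L" using assms(1) by (intro finite_lists_length_le) simp
  ultimately have "card (dpaths V E s t) \<le> card ?L" by (rule card_inj_on_le)
  also have "\<dots> = (\<Sum>i\<le>2 * card X + 1. card ?\<Sigma> ^ i)"
    using assms(1) by (intro card_lists_length_le) simp
  also have "card ?\<Sigma> = card V + (card V * card V + 1)"
    using assms(1) by (simp add: card_Plus card_image card_cartesian_product)
  finally show ?thesis .
qed

lemma fvs_attained:
  assumes "finite V"
  shows "\<exists>X \<subseteq> V. is_uforest (V - X) E \<and> card X = fvs V E"
proof -
  let ?S = "{card X | X. X \<subseteq> V \<and> is_uforest (V - X) E}"
  have "finite ?S" using assms by (auto intro: finite_subset[of _ "card ` Pow V"])
  moreover have "card V \<in> ?S" unfolding is_uforest_def ucycle_def by auto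
  ultimately have "Min ?S \<in> ?S" by (intro Min_in) auto
  then show ?thesis unfolding fvs_def by auto
qed

lemma fvs_eq_0_iff:
  assumes "finite V"
  shows "fvs V E = 0 \<longleftrightarrow> is_uforest V E"
proof
  assume "fvs V E = 0"
  then show "is_uforest V E"
    using fvs_attained[OF assms] assms by (metis Diff_empty card_0_eq finite_subset)
next
  assume "is_uforest V E"
  then have "0 \<in> {card X | X. X \<subseteq> V \<and> is_uforest (V - X) E}" by force
  moreover have "finite {card X | X. X \<subseteq> V \<and> is_uforest (V - X) E}"
    using assms by (auto intro: finite_subset[of _ "card ` Pow V"])
  ultimately show "fvs V E = 0" unfolding fvs_def by (meson Min_le le_zero_eq)
qed

lemma card_ge_3_if_not_uforest:
  assumes "finite V" "\<not> is_uforest V E"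
  shows "3 \<le> card V"
proof -
  obtain c where "3 \<le> length c" "distinct c" "set c \<subseteq> V"
    using assms(2) unfolding is_uforest_def ucycle_def by blast
  then show ?thesis using assms(1) by (metis card_mono distinct_card order_trans)
qed

lemma sum_powers_le_fvs_bound:
  fixes n k :: nat
  assumes "3 \<le> n" "0 < k" "k \<le> n"
  shows "(\<Sum>i\<le>2 * k + 1. (n + (n * n + 1)) ^ i) \<le> k ^ k * n ^ (12 * k)"
proof -
  have "n * n \<ge> 3 * n" and "n ^ 3 \<ge> 3 * (n * n)"
    using assms(1) by (simp_all add: power3_eq_cube)
  then have cube: "n + (n * n + 1) \<le> n ^ 3" "2 * k + 2 \<le> n ^ 3" using assms by linarith+
  have "(\<Sum>i\<le>2 * k + 1. (n + (n * n + 1)) ^ i) \<le> (\<Sum>i\<le>2 * k + 1. (n ^ 3) ^ (2 * k + 1))"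
    using cube(1) assms(1) by (intro sum_mono order_trans[OF power_mono power_increasing]) auto
  also have "\<dots> = (2 * k + 2) * (n ^ 3) ^ (2 * k + 1)" by simp
  also have "\<dots> \<le> n ^ 3 * (n ^ 3) ^ (2 * k + 1)" using cube(2) by (rule mult_right_mono) simp
  also have "\<dots> = (n ^ 3) ^ (2 * k + 2)" by simp
  also have "\<dots> = n ^ (3 * (2 * k + 2))" by (rule power_mult[symmetric])
  also have "\<dots> \<le> n ^ (12 * k)" using assms(1,2) by (intro power_increasing) auto
  also have "\<dots> \<le> k ^ k * n ^ (12 * k)" using assms(2) by simp
  finally show ?thesis .
qed

theorem lemma2:
  "\<exists>c::nat. \<forall>(V::nat set) (E::(nat \<times> nat) set) s t.
     finite V \<longrightarrow> E \<subseteq> V \<times> V \<longrightarrow> acyclic E \<longrightarrow> s \<in> V \<longrightarrow> t \<in> V \<longrightarrow>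
     card (dpaths V E s t) \<le> fvs V E ^ fvs V E * card V ^ (c * fvs V E)"
proof (intro exI[of _ 12] allI impI)
  fix V :: "nat set" and E :: "(nat \<times> nat) set" and s t
  assume fin: "finite V"
  show "card (dpaths V E s t) \<le> fvs V E ^ fvs V E * card V ^ (12 * fvs V E)"
  proof (cases "is_uforest V E")
    case True
    then have "fvs V E = 0" using fvs_eq_0_iff[OF fin] by simp
    then show ?thesis using card_dpaths_le_1_if_uforest[OF True] by simp
  next
    case False
    obtain X where X: "X \<subseteq> V" "is_uforest (V - X) E" "card X = fvs V E"
      using fvs_attained[OF fin] by blast
    have "0 < fvs V E" using False fvs_eq_0_iff[OF fin] by (metis gr0I)
    moreover have "fvs V E \<le> card V" using X fin by (metis card_mono)
    moreover note card_ge_3_if_not_uforest[OF fin False]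
    ultimately show ?thesis
      using card_dpaths_le_skeletons[OF fin X(1,2)] sum_powers_le_fvs_bound X(3) by (metis order_trans)
  qed
qed

end
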